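(* Let $r=[r_0,\ldots,r_m]$ and $c=[c_0,\ldots,c_n]$ be strictly increasing sequences of nonnegative integers with $r_0\le c_n$, and let $\{\hat r,\hat c\}$ be an ordered sub-pair of $\{r,c\}$ of length $p+1\ge 1$, $\hat c=[\hat c_0,\ldots,\hat c_p]$. Let $A$ be the $(m+1)\times(p+1)$ real matrix with entries $$A_{i,j}=\frac{1}{r_i!}\,\frac{d^{r_i}}{dx^{r_i}}\big(x^{\hat c_j}\big)\Big|_{x=1},\qquad 0\le i\le m,\ 0\le j\le p.$$ Then $A$ has full column rank $p+1$.
   Context: A pair $\{\hat r,\hat c\}$ is an ordered sub-pair of $\{r,c\}$ of length $p+1$ if $\hat r=[\hat r_0,\ldots,\hat r_p]$ is a subsequence of $r$, $\hat c=[\hat c_0,\ldots,\hat c_p]$ is a subsequence of $c$, and $\hat r_i\le \hat c_i$ for all $i=0,\ldots,p$. (Note $A_{i,j}=\binom{\hat c_j}{r_i}$, with $\binom{a}{b}:=0$ for $b>a$.) *)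

theory Defs
  imports "HOL-Analysis.Analysis" "HOL-Library.Sublist" "Jordan_Normal_Form.DL_Rank"
begin

definition ordered_subpair :: "nat list \<Rightarrow> nat list \<Rightarrow> nat list \<Rightarrow> nat list \<Rightarrow> bool" where
  "ordered_subpair rh ch r c \<longleftrightarrow>
     subseq rh r \<and> subseq ch c \<and> length rh = length ch \<and>
     (\<forall>i < length rh. rh ! i \<le> ch ! i)"

definition entryA :: "nat \<Rightarrow> nat \<Rightarrow> real" where
  "entryA k e = ((deriv ^^ k) (\<lambda>x::real. x ^ e) 1) / fact k"

definition matA :: "nat list \<Rightarrow> nat list \<Rightarrow> real mat" where
  "matA r ch = mat (length r) (length ch) (\<lambda>(i, j). entryA (r ! i) (ch ! j))"

end

theory Submission
  imports Defs "Jordan_Normal_Form.DL_Rank_Submatrix"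
begin

(* The entry A i j is the binomial coefficient (ch_j choose r_i).  Selecting the rows with r_i = rh_k
   leaves the square matrix (ch_j choose rh_k), so it suffices that det (g_j choose R_i) > 0 for strictly
   increasing R and g with R_i <= g_i.  Together with det (g_j choose R_i) >= 0 for all strictly
   increasing R and g, this is proved by induction on length R + sum R.  If R_0 = 0, differences of
   consecutive rows and the hockey-stick identity write the determinant as a sum of determinants of the
   same shape, one for every choice of g'_j in [g_j, g_(j+1)), with the remaining R_i lowered by one.
   If R_0 > 0, the absorption identity k (n choose k) = n (n - 1 choose k - 1) lowers all R_i and g_j by
   one at the cost of a positive factor. *)

lemma higher_deriv_power_real:
  "(deriv ^^ k) (\<lambda>x::real. x ^ e) = (\<lambda>x. real (e choose k) * fact k * x ^ (e - k))"
proof (induction k)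
  case 0
  then show ?case by simp
next
  case (Suc k)
  have absorb: "real (e choose k) * real (e - k) = real (e choose Suc k) * real (Suc k)"
    by (metis binomial_absorb_comp binomial_absorption mult.commute of_nat_mult)
  have "(deriv ^^ Suc k) (\<lambda>x::real. x ^ e) = deriv (\<lambda>x. real (e choose k) * fact k * x ^ (e - k))"
    using Suc by simp
  also have "\<dots> = (\<lambda>x. real (e choose k) * fact k * (real (e - k) * x ^ (e - k - 1)))"
    by (intro ext DERIV_imp_deriv) (auto intro!: derivative_eq_intros)
  also have "\<dots> = (\<lambda>x. (real (e choose k) * real (e - k)) * fact k * x ^ (e - Suc k))"
    by (simp add: mult_ac)
  also have "\<dots> = (\<lambda>x. real (e choose Suc k) * fact (Suc k) * x ^ (e - Suc k))"
    unfolding absorb by (simp add: fact_Suc mult_ac)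
  finally show ?case .
qed

lemma entryA_eq_binomial: "entryA k e = real (e choose k)"
  unfolding entryA_def higher_deriv_power_real by simp

lemma sorted_wrt_subseq: "subseq xs ys \<Longrightarrow> sorted_wrt P ys \<Longrightarrow> sorted_wrt P xs"
  by (induction rule: list_emb.induct) (auto dest: list_emb_set)

lemma sorted_wrt_map_pred:
  fixes xs :: "nat list"
  assumes "sorted_wrt (<) xs" and "\<forall>x\<in>set xs. 0 < x"
  shows "sorted_wrt (<) (map (\<lambda>x. x - 1) xs)"
  by (rule sorted_wrt_map_mono[OF assms(1)]) (use assms(2) in auto)

lemma subseq_strict_sorted_indices:
  fixes xs ys :: "'a::linorder list"
  assumes sub: "subseq xs ys" and sorted: "sorted_wrt (<) ys"
  obtains \<phi> where "strict_mono_on {..<length xs} \<phi>"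
    and "\<And>k. k < length xs \<Longrightarrow> \<phi> k < length ys \<and> ys ! \<phi> k = xs ! k"
proof -
  have "\<forall>k<length xs. \<exists>i<length ys. ys ! i = xs ! k"
    using list_emb_set[OF sub] by (fastforce simp: in_set_conv_nth)
  then obtain \<phi> where \<phi>: "\<And>k. k < length xs \<Longrightarrow> \<phi> k < length ys \<and> ys ! \<phi> k = xs ! k"
    by metis
  have "strict_mono_on {..<length xs} \<phi>"
  proof (rule strict_mono_onI)
    fix k l assume k: "k \<in> {..<length xs}" and l: "l \<in> {..<length xs}" and "k < l"
    then have "ys ! \<phi> k < ys ! \<phi> l"
      using \<phi> sorted_wrt_nth_less[OF sorted_wrt_subseq[OF sub sorted]] by auto
    moreover have "ys ! \<phi> l \<le> ys ! \<phi> k" if "\<phi> l \<le> \<phi> k"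
      using sorted_nth_mono[OF strict_sorted_imp_sorted[OF sorted] that] \<phi> k by auto
    ultimately show "\<phi> k < \<phi> l"
      by (meson leD linorder_not_less)
  qed
  from this \<phi> show thesis by (rule that)
qed

lemma det_mat_scale_rows_cols:
  fixes e :: "nat \<Rightarrow> nat \<Rightarrow> 'a::comm_ring_1"
  shows "det (mat n n (\<lambda>(j, i). a j * b i * e j i))
       = prod a {0..<n} * prod b {0..<n} * det (mat n n (\<lambda>(j, i). e j i))"
proof -
  have "det (mat n n (\<lambda>(j, i). a j * b i * e j i))
      = (\<Sum>p | p permutes {0..<n}. of_int (sign p) * (\<Prod>j = 0..<n. a j * b (p j) * e j (p j)))"
    by (subst det_def'[of _ n]) (auto intro!: sum.cong prod.cong simp: permutes_def)
  also have "\<dots> = (\<Sum>p | p permutes {0..<n}.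
      prod a {0..<n} * prod b {0..<n} * (of_int (sign p) * (\<Prod>j = 0..<n. e j (p j))))"
  proof (rule sum.cong[OF refl])
    fix p assume "p \<in> {p. p permutes {0..<n}}"
    then have "(\<Prod>j = 0..<n. b (p j)) = prod b {0..<n}"
      using prod.permute[of p "{0..<n}" b] by (simp add: comp_def)
    then show "of_int (sign p) * (\<Prod>j = 0..<n. a j * b (p j) * e j (p j))
        = prod a {0..<n} * prod b {0..<n} * (of_int (sign p) * (\<Prod>j = 0..<n. e j (p j)))"
      by (simp add: prod.distrib)
  qed
  also have "\<dots> = prod a {0..<n} * prod b {0..<n} * det (mat n n (\<lambda>(j, i). e j i))"
    by (subst det_def'[of _ n]) (auto simp: sum_distrib_left permutes_def intro!: sum.cong prod.cong)
  finally show ?thesis .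
qed

lemma det_eq_0_if_zero_row:
  fixes A :: "'a::comm_ring_1 mat"
  assumes "A \<in> carrier_mat n n" and "k < n" and "\<And>i. i < n \<Longrightarrow> A $$ (k, i) = 0"
  shows "det A = 0"
  using laplace_expansion_row[OF assms(1,2)] assms(3) by simp

lemma det_mat_row_differences:
  fixes a :: "nat \<Rightarrow> nat \<Rightarrow> 'a::comm_ring_1"
  shows "det (mat n n (\<lambda>(j, i). a j i))
       = det (mat n n (\<lambda>(j, i). if j = 0 then a 0 i else a j i - a (j - 1) i))"
proof -
  define D where "D = mat n n (\<lambda>(j, i). if j = 0 then a 0 i else a j i - a (j - 1) i)"
  define T where "T = mat n n (\<lambda>(j, k). if k \<le> j then 1 else 0 :: 'a)"
  have D: "D \<in> carrier_mat n n" and T: "T \<in> carrier_mat n n"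
    unfolding D_def T_def by auto
  have "mat n n (\<lambda>(j, i). a j i) = T * D"
  proof (rule eq_matI)
    fix j i assume "j < dim_row (T * D)" and "i < dim_col (T * D)"
    then have j: "j < n" and i: "i < n" using D T by auto
    have "(T * D) $$ (j, i) = (\<Sum>k\<in>{0..<n}. if k \<le> j then D $$ (k, i) else 0)"
      using i j D T by (auto simp: scalar_prod_def T_def intro!: sum.cong)
    also have "\<dots> = (\<Sum>k\<in>{0..<n} \<inter> {..j}. D $$ (k, i))"
      by (simp add: sum.inter_restrict)
    also have "\<dots> = (\<Sum>k\<le>j. D $$ (k, i))"
      using j by (intro sum.cong) auto
    also have "\<dots> = a j i"
      using i j by (induction j) (auto simp: D_def)
    finally show "mat n n (\<lambda>(j, i). a j i) $$ (j, i) = (T * D) $$ (j, i)"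
      using i j by simp
  qed (use D T in auto)
  moreover have "det T = 1"
    using det_lower_triangular[OF _ T] by (simp add: T_def prod_list_diag_prod)
  ultimately show ?thesis
    using det_mult[OF T D] by (simp add: D_def)
qed

lemma finite_choice_functions:
  fixes n :: nat
  assumes "\<And>j. j < n \<Longrightarrow> finite (I j)"
  shows "finite {f. (\<forall>j<n. f j \<in> I j) \<and> (\<forall>j\<ge>n. f j = j)}"
proof (rule finite_subset)
  show "{f. (\<forall>j<n. f j \<in> I j) \<and> (\<forall>j\<ge>n. f j = j)}
      \<subseteq> {f. (\<forall>j\<in>{0..<n}. f j \<in> (\<Union>j<n. I j)) \<and> (\<forall>j. j \<notin> {0..<n} \<longrightarrow> f j = j)}"
    by (auto simp: not_less) (metis lessThan_iff)
  show "finite {f. (\<forall>j\<in>{0..<n}. f j \<in> (\<Union>j<n. I j)) \<and> (\<forall>j. j \<notin> {0..<n} \<longrightarrow> f j = j)}"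
    by (rule finite_bounded_functions) (use assms in auto)
qed

(* Normalizing f outside the rows to the identity makes the index set of the sum finite. *)
lemma det_mat_row_sums:
  fixes a :: "nat \<Rightarrow> nat \<Rightarrow> 'a::comm_ring_1"
  assumes fin: "\<And>j. j < n \<Longrightarrow> finite (I j)"
  shows "det (mat n n (\<lambda>(j, i). \<Sum>t\<in>I j. a t i))
       = (\<Sum>f | (\<forall>j<n. f j \<in> I j) \<and> (\<forall>j\<ge>n. f j = j). det (mat n n (\<lambda>(j, i). a (f j) i)))"
proof -
  define S where "S = (\<Union>j<n. I j)"
  \<comment> \<open>padding the summands of row j by zero outside I j lets all rows range over S\<close>
  define v where "v = (\<lambda>j t. vec n (\<lambda>i. if t \<in> I j then a t i else 0))"
  define F where "F = {f. (\<forall>j\<in>{0..<n}. f j \<in> S) \<and> (\<forall>j. j \<notin> {0..<n} \<longrightarrow> f j = j)}"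
  have S: "finite S" using fin by (auto simp: S_def)
  have v: "v \<in> {0..<n} \<rightarrow> S \<rightarrow> carrier_vec n" by (auto simp: v_def)
  have "mat n n (\<lambda>(j, i). \<Sum>t\<in>I j. a t i) = mat\<^sub>r n n (\<lambda>j. finsum_vec TYPE('a) n (v j) S)"
  proof (rule eq_matI)
    fix j i assume "j < dim_row (mat\<^sub>r n n (\<lambda>j. finsum_vec TYPE('a) n (v j) S))"
      and "i < dim_col (mat\<^sub>r n n (\<lambda>j. finsum_vec TYPE('a) n (v j) S))"
    then have j: "j < n" and i: "i < n" by auto
    have "finsum_vec TYPE('a) n (v j) S $ i = (\<Sum>t\<in>S. v j t $ i)"
      using v j by (intro index_finsum_vec[OF S i]) auto
    also have "\<dots> = (\<Sum>t\<in>I j. a t i)"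
      using i j S by (simp add: v_def sum.If_cases S_def Int_absorb1 UN_upper)
    finally show "mat n n (\<lambda>(j, i). \<Sum>t\<in>I j. a t i) $$ (j, i)
        = mat\<^sub>r n n (\<lambda>j. finsum_vec TYPE('a) n (v j) S) $$ (j, i)"
      using i j by simp
  qed auto
  also have "det \<dots> = (\<Sum>f\<in>F. det (mat\<^sub>r n n (\<lambda>j. v j (f j))))"
    unfolding F_def by (rule det_linear_rows_sum[OF S v])
  also have "\<dots> = (\<Sum>f | (\<forall>j<n. f j \<in> I j) \<and> (\<forall>j\<ge>n. f j = j). det (mat\<^sub>r n n (\<lambda>j. v j (f j))))"
  proof (rule sum.mono_neutral_right)
    show "finite F"
      unfolding F_def using finite_bounded_functions[OF S finite_atLeastLessThan[of 0 n]] by simp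
    have "I j \<subseteq> S" if "j < n" for j
      using that by (auto simp: S_def)
    then show "{f. (\<forall>j<n. f j \<in> I j) \<and> (\<forall>j\<ge>n. f j = j)} \<subseteq> F"
      by (fastforce simp: F_def)
    show "\<forall>f\<in>F - {f. (\<forall>j<n. f j \<in> I j) \<and> (\<forall>j\<ge>n. f j = j)}. det (mat\<^sub>r n n (\<lambda>j. v j (f j))) = 0"
    proof
      fix f assume "f \<in> F - {f. (\<forall>j<n. f j \<in> I j) \<and> (\<forall>j\<ge>n. f j = j)}"
      then obtain k where "k < n" and "f k \<notin> I k" by (auto simp: F_def)
      then show "det (mat\<^sub>r n n (\<lambda>j. v j (f j))) = 0"
        by (intro det_eq_0_if_zero_row[of _ n k]) (auto simp: v_def)
    qed
  qed
  also have "\<dots> = (\<Sum>f | (\<forall>j<n. f j \<in> I j) \<and> (\<forall>j\<ge>n. f j = j). det (mat n n (\<lambda>(j, i). a (f j) i)))"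
    by (intro sum.cong refl arg_cong[where f = det] eq_matI) (auto simp: v_def)
  finally show ?thesis .
qed

lemma submatrix_strict_mono_rows:
  assumes \<phi>: "strict_mono_on {..<p} \<phi>" and rows: "\<And>k. k < p \<Longrightarrow> \<phi> k < dim_row A"
  shows "submatrix A (\<phi> ` {..<p}) UNIV = mat p (dim_col A) (\<lambda>(k, j). A $$ (\<phi> k, j))"
proof -
  have inj: "inj_on \<phi> {..<p}"
    using \<phi> by (rule strict_mono_on_imp_inj_on)
  have "{a \<in> \<phi> ` {..<p}. a < \<phi> k} = \<phi> ` {..<k}" if "k < p" for k
    using strict_mono_on_less[OF \<phi>] that by auto
  then have pick: "pick (\<phi> ` {..<p}) k = \<phi> k" if "k < p" for k
    using pick_card_in_set[of "\<phi> k" "\<phi> ` {..<p}"] that inj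
    by (simp add: card_image inj_on_subset[OF inj])
  have "{i. i < dim_row A \<and> i \<in> \<phi> ` {..<p}} = \<phi> ` {..<p}"
    using rows by auto
  then have dim: "card {i. i < dim_row A \<and> i \<in> \<phi> ` {..<p}} = p"
    using inj by (simp add: card_image)
  show ?thesis
    by (rule eq_matI) (auto simp: dim_submatrix dim submatrix_index pick pick_UNIV)
qed

lemma (in vec_space) rank_eq_if_row_selection_det_nonzero:
  assumes A: "A \<in> carrier_mat n p"
    and \<phi>: "strict_mono_on {..<p} \<phi>" "\<And>k. k < p \<Longrightarrow> \<phi> k < n"
    and det: "det (mat p p (\<lambda>(k, j). A $$ (\<phi> k, j))) \<noteq> 0"
  shows "rank A = p"
proof (rule antisym)
  show "rank A \<le> p"
    using A by (rule rank_le_nc)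
  have "det (submatrix A (\<phi> ` {..<p}) UNIV) \<noteq> 0"
    using submatrix_strict_mono_rows[OF \<phi>(1), of A] \<phi>(2) A det by simp
  then have "card {j. j < p \<and> j \<in> UNIV} \<le> rank A"
    using A by (intro rank_gt_minor)
  then show "p \<le> rank A" by simp
qed

(* Rows are indexed by g and columns by R; the matrix of the theorem is the transpose. *)
definition binomial_mat :: "nat list \<Rightarrow> (nat \<Rightarrow> nat) \<Rightarrow> real mat" where
  "binomial_mat R g = mat (length R) (length R) (\<lambda>(j, i). real (g j choose R ! i))"

lemma binomial_diff_eq_sum:
  assumes "a \<le> b" and "0 < k"
  shows "real (b choose k) - real (a choose k) = (\<Sum>t\<in>{a..<b}. real (t choose (k - 1)))"
  using assms(1)
proof (induction b rule: dec_induct)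
  case base
  then show ?case by simp
next
  case (step b)
  obtain k' where k: "k = Suc k'" using assms(2) gr0_implies_Suc by blast
  have "real (Suc b choose k) = real (b choose k') + real (b choose k)"
    by (simp add: k)
  then show ?case using step by (simp add: k)
qed

lemma det_binomial_mat_Cons_0:
  assumes sorted: "sorted_wrt (<) (0 # R)"
    and g: "\<And>j. j < length R \<Longrightarrow> g j \<le> g (Suc j)"
  shows "det (binomial_mat (0 # R) g)
       = (\<Sum>f | (\<forall>j<length R. f j \<in> {g j..<g (Suc j)}) \<and> (\<forall>j\<ge>length R. f j = j).
            det (binomial_mat (map (\<lambda>x. x - 1) R) f))"
proof -
  define n where "n = length R"
  \<comment> \<open>since x choose 0 = 1, the first column of the row differences D is the first unit vector\<close>
  define D where "D = mat (Suc n) (Suc n) (\<lambda>(j, i). if j = 0 then real (g 0 choose (0 # R) ! i)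
    else real (g j choose (0 # R) ! i) - real (g (j - 1) choose (0 # R) ! i))"
  have D: "D \<in> carrier_mat (Suc n) (Suc n)" by (simp add: D_def)
  have "det (binomial_mat (0 # R) g) = det D"
    unfolding binomial_mat_def D_def n_def length_Cons by (rule det_mat_row_differences)
  also have "\<dots> = (\<Sum>j<Suc n. D $$ (j, 0) * cofactor D j 0)"
    using laplace_expansion_column[OF D] by simp
  also have "\<dots> = D $$ (0, 0) * cofactor D 0 0 + (\<Sum>j<n. D $$ (Suc j, 0) * cofactor D (Suc j) 0)"
    by (rule sum.lessThan_Suc_shift)
  also have "\<dots> = det (mat_delete D 0 0)"
    by (simp add: D_def cofactor_def)
  also have "mat_delete D 0 0 = mat n n (\<lambda>(j, i). \<Sum>t\<in>{g j..<g (Suc j)}. real (t choose (R ! i - 1)))"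
  proof (rule eq_matI)
    fix j i assume "j < dim_row (mat n n (\<lambda>(j, i). \<Sum>t\<in>{g j..<g (Suc j)}. real (t choose (R ! i - 1))))"
      and "i < dim_col (mat n n (\<lambda>(j, i). \<Sum>t\<in>{g j..<g (Suc j)}. real (t choose (R ! i - 1))))"
    then have j: "j < n" and i: "i < n" by auto
    have "0 < R ! i" using sorted i by (simp add: n_def)
    then show "mat_delete D 0 0 $$ (j, i) = mat n n (\<lambda>(j, i). \<Sum>t\<in>{g j..<g (Suc j)}. real (t choose (R ! i - 1))) $$ (j, i)"
      using i j D g[of j] binomial_diff_eq_sum by (simp add: mat_delete_def D_def n_def)
  qed (use D in auto)
  also have "det \<dots> = (\<Sum>f | (\<forall>j<n. f j \<in> {g j..<g (Suc j)}) \<and> (\<forall>j\<ge>n. f j = j).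
      det (mat n n (\<lambda>(j, i). real (f j choose (R ! i - 1)))))"
    by (rule det_mat_row_sums) simp
  also have "\<dots> = (\<Sum>f | (\<forall>j<n. f j \<in> {g j..<g (Suc j)}) \<and> (\<forall>j\<ge>n. f j = j).
      det (binomial_mat (map (\<lambda>x. x - 1) R) f))"
    by (intro sum.cong refl arg_cong[where f = det] eq_matI) (auto simp: binomial_mat_def n_def)
  finally show ?thesis by (simp add: n_def)
qed

lemma det_binomial_mat_decrement:
  assumes R: "\<And>i. i < length R \<Longrightarrow> 0 < R ! i" and g: "\<And>j. j < length R \<Longrightarrow> 0 < g j"
  shows "det (binomial_mat R g) = (\<Prod>j = 0..<length R. real (g j))
    * (\<Prod>i = 0..<length R. inverse (real (R ! i)))
    * det (binomial_mat (map (\<lambda>x. x - 1) R) (\<lambda>j. g j - 1))"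
proof -
  have scaled: "binomial_mat R g = mat (length R) (length R)
      (\<lambda>(j, i). real (g j) * inverse (real (R ! i)) * real ((g j - 1) choose (R ! i - 1)))"
  proof (rule eq_matI)
    fix j i assume "j < dim_row (mat (length R) (length R)
      (\<lambda>(j, i). real (g j) * inverse (real (R ! i)) * real ((g j - 1) choose (R ! i - 1))))"
      and "i < dim_col (mat (length R) (length R)
      (\<lambda>(j, i). real (g j) * inverse (real (R ! i)) * real ((g j - 1) choose (R ! i - 1))))"
    then have j: "j < length R" and i: "i < length R" by auto
    have "real (R ! i) * real (g j choose R ! i) = real (g j) * real ((g j - 1) choose (R ! i - 1))"
      using times_binomial_minus1_eq[OF R[OF i]] by (metis of_nat_mult)
    then show "binomial_mat R g $$ (j, i) = mat (length R) (length R)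
      (\<lambda>(j, i). real (g j) * inverse (real (R ! i)) * real ((g j - 1) choose (R ! i - 1))) $$ (j, i)"
      using i j R[OF i] by (simp add: binomial_mat_def field_simps)
  qed (simp_all add: binomial_mat_def)
  have shifted: "binomial_mat (map (\<lambda>x. x - 1) R) (\<lambda>j. g j - 1)
      = mat (length R) (length R) (\<lambda>(j, i). real ((g j - 1) choose (R ! i - 1)))"
    by (rule eq_matI) (auto simp: binomial_mat_def)
  show ?thesis
    unfolding scaled shifted
    by (rule det_mat_scale_rows_cols[where a = "\<lambda>j. real (g j)" and b = "\<lambda>i. inverse (real (R ! i))"
          and e = "\<lambda>j i. real ((g j - 1) choose (R ! i - 1))"])
qed

lemma binomial_mat_det_sign_Cons_0:
  assumes sorted: "sorted_wrt (<) (0 # R)"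
    and g: "strict_mono_on {..length R} g"
    and IH: "\<And>f. strict_mono_on {..<length R} f \<Longrightarrow>
      0 \<le> det (binomial_mat (map (\<lambda>x. x - 1) R) f) \<and>
      ((\<forall>j<length R. R ! j - 1 \<le> f j) \<longrightarrow> 0 < det (binomial_mat (map (\<lambda>x. x - 1) R) f))"
  shows "0 \<le> det (binomial_mat (0 # R) g) \<and>
    ((\<forall>j<length (0 # R). (0 # R) ! j \<le> g j) \<longrightarrow> 0 < det (binomial_mat (0 # R) g))"
proof -
  define n where "n = length R"
  define F where "F = {f. (\<forall>j<n. f j \<in> {g j..<g (Suc j)}) \<and> (\<forall>j\<ge>n. f j = j)}"
  define d where "d f = det (binomial_mat (map (\<lambda>x. x - 1) R) f)" for f
  have g_le: "g j \<le> g k" if "j \<le> k" "k \<le> n" for j k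
    using strict_mono_on_leD[OF g] that by (simp add: n_def)
  have det_eq: "det (binomial_mat (0 # R) g) = (\<Sum>f\<in>F. d f)"
    unfolding F_def d_def n_def using sorted g_le by (intro det_binomial_mat_Cons_0) (auto simp: n_def)
  have F_mono: "strict_mono_on {..<n} f" if "f \<in> F" for f
  proof (rule strict_mono_onI)
    fix j k assume "j \<in> {..<n}" "k \<in> {..<n}" "j < k"
    then have "f j < g (Suc j)" "g (Suc j) \<le> g k" "g k \<le> f k"
      using that g_le[of "Suc j" k] by (auto simp: F_def)
    then show "f j < f k" by linarith
  qed
  have nonneg: "0 \<le> d f" if "f \<in> F" for f
    unfolding d_def using IH[OF F_mono[OF that, unfolded n_def]] by (rule conjunct1)
  have "finite F"
    unfolding F_def by (rule finite_choice_functions) simp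
  show ?thesis
  proof
    show "0 \<le> det (binomial_mat (0 # R) g)"
      unfolding det_eq by (rule sum_nonneg) (rule nonneg)
    show "(\<forall>j<length (0 # R). (0 # R) ! j \<le> g j) \<longrightarrow> 0 < det (binomial_mat (0 # R) g)"
    proof
      assume dominated: "\<forall>j<length (0 # R). (0 # R) ! j \<le> g j"
      \<comment> \<open>the largest choice in every interval inherits the domination from g (j + 1)\<close>
      define f\<^sub>0 where "f\<^sub>0 j = (if j < n then g (Suc j) - 1 else j)" for j
      have "f\<^sub>0 j \<in> {g j..<g (Suc j)}" if "j < n" for j
        using strict_mono_onD[OF g, of j "Suc j"] that by (auto simp: f\<^sub>0_def n_def)
      then have f\<^sub>0: "f\<^sub>0 \<in> F"
        by (auto simp: F_def f\<^sub>0_def)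
      have "\<forall>j<length R. R ! j - 1 \<le> f\<^sub>0 j"
        using dominated by (auto simp: f\<^sub>0_def n_def)
      then have "0 < d f\<^sub>0"
        unfolding d_def using IH[OF F_mono[OF f\<^sub>0, unfolded n_def]] by blast
      also have "d f\<^sub>0 \<le> (\<Sum>f\<in>F. d f)"
        using \<open>finite F\<close> f\<^sub>0 nonneg by (intro member_le_sum) auto
      finally show "0 < det (binomial_mat (0 # R) g)"
        unfolding det_eq .
    qed
  qed
qed

lemma binomial_mat_det_sign_pos_entries:
  assumes R: "\<And>i. i < length R \<Longrightarrow> 0 < R ! i"
    and g: "strict_mono_on {..<length R} g"
    and IH: "strict_mono_on {..<length R} (\<lambda>j. g j - 1) \<Longrightarrow>
      0 \<le> det (binomial_mat (map (\<lambda>x. x - 1) R) (\<lambda>j. g j - 1)) \<and>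
      ((\<forall>j<length R. R ! j - 1 \<le> g j - 1) \<longrightarrow>
        0 < det (binomial_mat (map (\<lambda>x. x - 1) R) (\<lambda>j. g j - 1)))"
  shows "0 \<le> det (binomial_mat R g) \<and>
    ((\<forall>j<length R. R ! j \<le> g j) \<longrightarrow> 0 < det (binomial_mat R g))"
proof (cases "R \<noteq> [] \<and> g 0 = 0")
  case True
  then have "det (binomial_mat R g) = 0"
    using R by (intro det_eq_0_if_zero_row[of _ "length R" 0]) (auto simp: binomial_mat_def)
  moreover have "\<not> R ! 0 \<le> g 0"
    using True R[of 0] by simp
  ultimately show ?thesis
    using True by auto
next
  case False
  have g_pos: "0 < g j" if "j < length R" for j
  proof -
    have "R \<noteq> []" using that by auto
    then show ?thesis
      using False strict_mono_onD[OF g, of 0 j] that by (cases "j = 0") auto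
  qed
  have "strict_mono_on {..<length R} (\<lambda>j. g j - 1)"
  proof (rule strict_mono_onI)
    fix j k assume "j \<in> {..<length R}" "k \<in> {..<length R}" "j < k"
    then have "g j < g k" "0 < g j"
      using strict_mono_onD[OF g] g_pos[of j] by auto
    then show "g j - 1 < g k - 1" by arith
  qed
  have IH': "0 \<le> det (binomial_mat (map (\<lambda>x. x - 1) R) (\<lambda>j. g j - 1)) \<and>
      ((\<forall>j<length R. R ! j \<le> g j) \<longrightarrow> 0 < det (binomial_mat (map (\<lambda>x. x - 1) R) (\<lambda>j. g j - 1)))"
  proof -
    have "R ! j - 1 \<le> g j - 1 \<longleftrightarrow> R ! j \<le> g j" if "j < length R" for j
      using R[OF that] g_pos[OF that] by arith
    then show ?thesis
      using IH[OF \<open>strict_mono_on {..<length R} (\<lambda>j. g j - 1)\<close>] by simp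
  qed
  define c where "c = (\<Prod>j = 0..<length R. real (g j)) * (\<Prod>i = 0..<length R. inverse (real (R ! i)))"
  have "0 < c"
    unfolding c_def by (intro mult_pos_pos prod_pos) (simp_all add: R g_pos)
  moreover have "det (binomial_mat R g) = c * det (binomial_mat (map (\<lambda>x. x - 1) R) (\<lambda>j. g j - 1))"
    unfolding c_def by (rule det_binomial_mat_decrement[of R g, OF R g_pos])
  ultimately show ?thesis
    using IH' by (simp add: mult_pos_pos)
qed

lemma binomial_mat_det_sign:
  assumes "sorted_wrt (<) R" and "strict_mono_on {..<length R} g"
  shows "0 \<le> det (binomial_mat R g) \<and>
    ((\<forall>j<length R. R ! j \<le> g j) \<longrightarrow> 0 < det (binomial_mat R g))"
  using assms
proof (induction "length R + sum_list R" arbitrary: R g rule: less_induct)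
  case less
  show ?case
  proof (cases R)
    case Nil
    then show ?thesis by (simp add: binomial_mat_def)
  next
    case (Cons r R')
    show ?thesis
    proof (cases "r = 0")
      case True
      have "sum_list (map (\<lambda>x. x - 1) R') \<le> sum_list R'"
        using sum_list_mono[of R' "\<lambda>x. x - 1" "\<lambda>x. x"] by simp
      moreover have "sorted_wrt (<) (map (\<lambda>x. x - 1) R')"
        using less.prems(1) Cons True by (intro sorted_wrt_map_pred) auto
      ultimately have measure_sorted: "length (map (\<lambda>x. x - 1) R') + sum_list (map (\<lambda>x. x - 1) R')
          < length R + sum_list R" "sorted_wrt (<) (map (\<lambda>x. x - 1) R')"
        using Cons by auto
      show ?thesis
        unfolding Cons True
      proof (rule binomial_mat_det_sign_Cons_0)
        show "sorted_wrt (<) (0 # R')"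
          using less.prems(1) Cons True by simp
        show "strict_mono_on {..length R'} g"
          using less.prems(2) Cons by (simp add: lessThan_Suc_atMost)
        fix f :: "nat \<Rightarrow> nat" assume "strict_mono_on {..<length R'} f"
        then show "0 \<le> det (binomial_mat (map (\<lambda>x. x - 1) R') f) \<and>
            ((\<forall>j<length R'. R' ! j - 1 \<le> f j) \<longrightarrow> 0 < det (binomial_mat (map (\<lambda>x. x - 1) R') f))"
          using less.hyps[OF measure_sorted] by simp
      qed
    next
      case False
      have R_pos: "\<forall>x\<in>set R. 0 < x"
        using less.prems(1) Cons False by auto
      then have "sum_list (map (\<lambda>x. x - 1) R) < sum_list (map (\<lambda>x. x) R)"
        using Cons by (intro sum_list_strict_mono) auto
      moreover have "sorted_wrt (<) (map (\<lambda>x. x - 1) R)"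
        using less.prems(1) R_pos by (rule sorted_wrt_map_pred)
      ultimately show ?thesis
        using less R_pos by (intro binomial_mat_det_sign_pos_entries) (auto simp: nth_mem)
    qed
  qed
qed

theorem corollary2:
  fixes r c rh ch :: "nat list"
  assumes "r \<noteq> []" and "c \<noteq> []"
    and "sorted_wrt (<) r" and "sorted_wrt (<) c"
    and "hd r \<le> last c"
    and "ordered_subpair rh ch r c"
    and "ch \<noteq> []"
  shows "vec_space.rank (length r) (matA r ch) = length ch"
proof -
  have sub: "subseq rh r" "subseq ch c" and len: "length rh = length ch"
    and dominated: "\<forall>k<length rh. rh ! k \<le> ch ! k"
    using assms(6) by (auto simp: ordered_subpair_def)
  obtain \<phi> where \<phi>: "strict_mono_on {..<length ch} \<phi>"
    and \<phi>_nth: "\<And>k. k < length ch \<Longrightarrow> \<phi> k < length r \<and> r ! \<phi> k = rh ! k"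
    using subseq_strict_sorted_indices[OF sub(1) assms(3)] len by metis
  have "strict_mono_on {..<length rh} ((!) ch)"
    using sorted_wrt_subseq[OF sub(2) assms(4)] len
    by (auto simp: strict_mono_on_def sorted_wrt_iff_nth_less)
  then have "0 < det (binomial_mat rh ((!) ch))"
    using binomial_mat_det_sign sorted_wrt_subseq[OF sub(1) assms(3)] dominated by blast
  moreover have "mat (length ch) (length ch) (\<lambda>(k, j). matA r ch $$ (\<phi> k, j))
      = transpose_mat (binomial_mat rh ((!) ch))"
    by (rule eq_matI) (auto simp: matA_def binomial_mat_def entryA_eq_binomial \<phi>_nth len)
  ultimately show ?thesis
    using \<phi> \<phi>_nth det_transpose[of "binomial_mat rh ((!) ch)" "length ch"]
    by (intro vec_space.rank_eq_if_row_selection_det_nonzero) (auto simp: matA_def binomial_mat_def len)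
qed

end
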